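(* Let $\sigma$ be a 2-structure and $X\subsetneq V(\sigma)$ with $\sigma[X]$ prime; write $\overline{X}=V(\sigma)\setminus X$. Suppose Statement (S3) holds (there is no $Y\subseteq\overline{X}$ with $|Y|=3$ and $\sigma[X\cup Y]$ prime). Let $e,f\in E(\sigma)$ and $\alpha\in X$. If the outside graph $\Gamma_{(\sigma,\overline{X})}$ has no isolated vertices, then: (1) if $\langle X\rangle^{(e,f)}_\sigma\neq\emptyset$, then $\langle X\rangle^{(e',f')}_\sigma=\emptyset$ for all $e',f'\in E(\sigma)$ with $\{e',f'\}\neq\{e,f\}$; (2) if $X^{(e,f)}_\sigma(\alpha)\neq\emptyset$, then $X^{(e',f')}_\sigma(\alpha)=\emptyset$ for all $e',f'\in E(\sigma)$ with $\{e',f'\}\neq\{e,f\}$.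
   Context: A 2-structure $\sigma$ consists of a vertex set $V(\sigma)$ and an equivalence relation $\equiv_\sigma$ on ordered pairs of distinct vertices; $E(\sigma)$ is its set of classes; $\sigma[W]$ is the induced 2-structure on $W$. A module is a set $M$ such that for all $x,y\in M$ and $v\notin M$, $(x,v)\equiv_\sigma(y,v)$ and $(v,x)\equiv_\sigma(v,y)$; $\sigma$ is prime if $|V(\sigma)|\geq3$ and its only modules are $\emptyset$, $V(\sigma)$ and singletons. Given $\sigma[X]$ prime: $\langle X\rangle_\sigma=\{v\in\overline{X}: X\text{ is a module of }\sigma[X\cup\{v\}]\}$; for $\alpha\in X$, $X_\sigma(\alpha)=\{v\in\overline{X}:\{\alpha,v\}\text{ is a module of }\sigma[X\cup\{v\}]\}$. For $e,f\in E(\sigma)$: $\langle X\rangle^{(e,f)}_\sigma=\{v\in\langle X\rangle_\sigma:(v,\beta)\in e,(\beta,v)\in f\}$ for any $\beta\in X$ (independent of $\beta$); $X^{(e,f)}_\sigma(\alpha)=\{v\in X_\sigma(\alpha):(v,\alpha)\in e,(\alpha,v)\in f\}$. The outside graph $\Gamma_{(\sigma,\overline{X})}$ has vertex set $\overline{X}$ and edges the 2-element sets $Y\subseteq\overline{X}$ with $\sigma[X\cup Y]$ prime. *)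

theory Defs
  imports Main
begin

definition offdiag :: "'a set \<Rightarrow> ('a \<times> 'a) set" where
  "offdiag V = {(x, y). x \<in> V \<and> y \<in> V \<and> x \<noteq> y}"

definition two_structure :: "'a set \<Rightarrow> (('a \<times> 'a) \<times> ('a \<times> 'a)) set \<Rightarrow> bool" where
  "two_structure V R \<longleftrightarrow> equiv (offdiag V) R"

definition classes :: "'a set \<Rightarrow> (('a \<times> 'a) \<times> ('a \<times> 'a)) set \<Rightarrow> ('a \<times> 'a) set set" where
  "classes V R = offdiag V // R"

definition induced_rel :: "(('a \<times> 'a) \<times> ('a \<times> 'a)) set \<Rightarrow> 'a set \<Rightarrow> (('a \<times> 'a) \<times> ('a \<times> 'a)) set" where
  "induced_rel R W = R \<inter> (offdiag W \<times> offdiag W)"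

definition is_module :: "'a set \<Rightarrow> (('a \<times> 'a) \<times> ('a \<times> 'a)) set \<Rightarrow> 'a set \<Rightarrow> bool" where
  "is_module V R M \<longleftrightarrow> M \<subseteq> V \<and>
     (\<forall>x\<in>M. \<forall>y\<in>M. \<forall>v\<in>V - M. ((x, v), (y, v)) \<in> R \<and> ((v, x), (v, y)) \<in> R)"

text \<open>|V| \<ge> 3 is written as the existence of three distinct vertices (so that it also
  makes sense for infinite V).\<close>
definition prime_2s :: "'a set \<Rightarrow> (('a \<times> 'a) \<times> ('a \<times> 'a)) set \<Rightarrow> bool" where
  "prime_2s V R \<longleftrightarrow> (\<exists>a\<in>V. \<exists>b\<in>V. \<exists>c\<in>V. a \<noteq> b \<and> a \<noteq> c \<and> b \<noteq> c) \<and>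
     (\<forall>M. is_module V R M \<longrightarrow> M = {} \<or> M = V \<or> (\<exists>x. M = {x}))"

definition ext_set :: "'a set \<Rightarrow> (('a \<times> 'a) \<times> ('a \<times> 'a)) set \<Rightarrow> 'a set \<Rightarrow> 'a set" where
  "ext_set V R X = {v \<in> V - X. is_module (X \<union> {v}) (induced_rel R (X \<union> {v})) X}"

definition ext_at :: "'a set \<Rightarrow> (('a \<times> 'a) \<times> ('a \<times> 'a)) set \<Rightarrow> 'a set \<Rightarrow> 'a \<Rightarrow> 'a set" where
  "ext_at V R X \<alpha> = {v \<in> V - X. is_module (X \<union> {v}) (induced_rel R (X \<union> {v})) {\<alpha>, v}}"

text \<open><X>^(e,f)_sigma; the definition uses some beta in X (independent of the choice).\<close>
definition ext_set_ef :: "'a set \<Rightarrow> (('a \<times> 'a) \<times> ('a \<times> 'a)) set \<Rightarrow> 'a set \<Rightarrow>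
    ('a \<times> 'a) set \<Rightarrow> ('a \<times> 'a) set \<Rightarrow> 'a set" where
  "ext_set_ef V R X e f = {v \<in> ext_set V R X. \<exists>\<beta>\<in>X. (v, \<beta>) \<in> e \<and> (\<beta>, v) \<in> f}"

definition ext_at_ef :: "'a set \<Rightarrow> (('a \<times> 'a) \<times> ('a \<times> 'a)) set \<Rightarrow> 'a set \<Rightarrow> 'a \<Rightarrow>
    ('a \<times> 'a) set \<Rightarrow> ('a \<times> 'a) set \<Rightarrow> 'a set" where
  "ext_at_ef V R X \<alpha> e f = {v \<in> ext_at V R X \<alpha>. (v, \<alpha>) \<in> e \<and> (\<alpha>, v) \<in> f}"

definition outside_edge :: "'a set \<Rightarrow> (('a \<times> 'a) \<times> ('a \<times> 'a)) set \<Rightarrow> 'a set \<Rightarrow> 'a \<Rightarrow> 'a \<Rightarrow> bool" where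
  "outside_edge V R X u w \<longleftrightarrow> u \<in> V - X \<and> w \<in> V - X \<and> u \<noteq> w \<and>
     prime_2s (X \<union> {u, w}) (induced_rel R (X \<union> {u, w}))"

end

theory Submission
  imports Defs
begin

text \<open>Let v and w be outside vertices of types (e, f) and (e', f') with (e, f) \<noteq> (e', f'), and
  let u be a neighbour of v in the outside graph, so that sigma[X \<union> {u, v}] is prime. By (S3)
  adding w destroys primality: either X \<union> {u, v} is a module of sigma[X \<union> {u, v, w}], or w
  has a twin z in X \<union> {u, v}. The sets <X> and X(beta) are pairwise disjoint, two vertices of
  <X> (or of X(alpha)) never extend X to a prime 2-structure, twins over X lie in the same such
  set and have the same type; this excludes every alternative but one. For <X> the survivor
  is the module case, which puts (w, v) in e' and (v, w) in f'; for X(alpha) it is z = alpha,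
  which puts (v, w) in e and (w, v) in f. Exchanging v and w gives e = f' and f = e'.\<close>

abbreviation is_module_in :: "(('a \<times> 'a) \<times> ('a \<times> 'a)) set \<Rightarrow> 'a set \<Rightarrow> 'a set \<Rightarrow> bool" where
  "is_module_in R W M \<equiv> is_module W (induced_rel R W) M"

abbreviation prime_in :: "(('a \<times> 'a) \<times> ('a \<times> 'a)) set \<Rightarrow> 'a set \<Rightarrow> bool" where
  "prime_in R W \<equiv> prime_2s W (induced_rel R W)"

definition indistinguishable :: "(('a \<times> 'a) \<times> ('a \<times> 'a)) set \<Rightarrow> 'a set \<Rightarrow> 'a \<Rightarrow> 'a \<Rightarrow> bool" where
  "indistinguishable R Z x y \<longleftrightarrow> (\<forall>z\<in>Z. ((x, z), (y, z)) \<in> R \<and> ((z, x), (z, y)) \<in> R)"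

lemma indistinguishable_mono:
  "Z' \<subseteq> Z \<Longrightarrow> indistinguishable R Z x y \<Longrightarrow> indistinguishable R Z' x y"
  unfolding indistinguishable_def by blast

lemma is_module_in_iff:
  "is_module_in R W M \<longleftrightarrow> M \<subseteq> W \<and> (\<forall>x\<in>M. \<forall>y\<in>M. indistinguishable R (W - M) x y)"
  unfolding is_module_def induced_rel_def offdiag_def indistinguishable_def by blast

lemma is_module_in_restrict:
  "is_module_in R Z M \<Longrightarrow> W \<subseteq> Z \<Longrightarrow> M \<inter> W = N \<Longrightarrow> is_module_in R W N"
  unfolding is_module_in_iff indistinguishable_def by blast

lemma nontrivial_module_not_prime:
  assumes "is_module_in R W M" "a \<in> M" "b \<in> M" "a \<noteq> b" "c \<in> W - M"
  shows "\<not> prime_in R W"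
  using assms unfolding prime_2s_def by blast

lemma prime_2s_obtain_other:
  assumes "prime_2s W S"
  obtains c where "c \<in> W - {a, b}"
proof -
  obtain x y z where "x \<in> W" "y \<in> W" "z \<in> W" "x \<noteq> y" "x \<noteq> z" "y \<noteq> z"
    using assms unfolding prime_2s_def by blast
  then show ?thesis
    using that by (metis Diff_iff insertE singletonD)
qed

lemma prime_2s_obtain_two_others:
  assumes "prime_2s W S"
  obtains a b where "a \<in> W - {c}" "b \<in> W - {c}" "a \<noteq> b"
proof -
  obtain x y z where "x \<in> W" "y \<in> W" "z \<in> W" "x \<noteq> y" "x \<noteq> z" "y \<noteq> z"
    using assms unfolding prime_2s_def by blast
  then show ?thesis
    using that by (metis Diff_iff singletonD)
qed

lemma prime_insert_cases:
  assumes W: "prime_in R W" and w: "w \<notin> W" and not_prime: "\<not> prime_in R (insert w W)"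
  shows "is_module_in R (insert w W) W \<or> (\<exists>z\<in>W. is_module_in R (insert w W) {z, w})"
proof -
  have "\<exists>a\<in>insert w W. \<exists>b\<in>insert w W. \<exists>c\<in>insert w W. a \<noteq> b \<and> a \<noteq> c \<and> b \<noteq> c"
    using W unfolding prime_2s_def by blast
  then obtain M where M: "is_module_in R (insert w W) M" "M \<noteq> {}" "M \<noteq> insert w W" "\<forall>x. M \<noteq> {x}"
    using not_prime unfolding prime_2s_def by blast
  have "is_module_in R W (M \<inter> W)"
    using M(1) by (rule is_module_in_restrict) blast+
  then have "M \<inter> W = {} \<or> M \<inter> W = W \<or> (\<exists>x. M \<inter> W = {x})"
    using W unfolding prime_2s_def by blast
  moreover have "M \<subseteq> insert w W"
    using M(1) unfolding is_module_in_iff by blast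
  ultimately have "M = W \<or> (\<exists>z\<in>W. M = {z, w})"
    using M(2-4) w by (elim disjE exE) blast+
  then show ?thesis
    using M(1) by blast
qed

lemma ext_set_iff:
  "v \<in> ext_set V R X \<longleftrightarrow> v \<in> V - X \<and> (\<forall>x\<in>X. \<forall>y\<in>X. indistinguishable R {v} x y)"
proof -
  have "v \<notin> X \<Longrightarrow> X \<union> {v} - X = {v}" by blast
  then show ?thesis
    unfolding ext_set_def is_module_in_iff by auto
qed

lemma ext_set_pair_not_prime:
  assumes X: "prime_in R X" and u: "u \<in> ext_set V R X" and v: "v \<in> ext_set V R X"
  shows "\<not> prime_in R (X \<union> {u, v})"
proof -
  have "is_module_in R (X \<union> {u, v}) X"
    using u v unfolding is_module_in_iff ext_set_iff indistinguishable_def by auto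
  moreover obtain a b where "a \<in> X - {u}" "b \<in> X - {u}" "a \<noteq> b"
    using X by (rule prime_2s_obtain_two_others)
  moreover have "u \<notin> X"
    using u by (simp add: ext_set_def)
  ultimately show ?thesis
    by (intro nontrivial_module_not_prime[where M = X and a = a and b = b and c = u]) auto
qed

lemma indistinguishable_if_pair_module:
  assumes "is_module_in R A {z, w}" "X \<subseteq> A" "z \<notin> X" "w \<notin> X"
  shows "indistinguishable R X z w"
  using assms unfolding is_module_in_iff indistinguishable_def by blast

context
  fixes V :: "'a set" and R :: "(('a \<times> 'a) \<times> ('a \<times> 'a)) set"
  assumes two: "two_structure V R"
begin

lemma two_structure_equiv: "equiv (offdiag V) R"
  using two unfolding two_structure_def .

lemma two_structure_sym: "(p, q) \<in> R \<Longrightarrow> (q, p) \<in> R"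
  using two_structure_equiv unfolding equiv_def by (meson symD)

lemma two_structure_trans: "(p, q) \<in> R \<Longrightarrow> (q, r) \<in> R \<Longrightarrow> (p, r) \<in> R"
  using two_structure_equiv unfolding equiv_def by (meson transD)

lemma indistinguishable_sym:
  "indistinguishable R Z x y \<Longrightarrow> indistinguishable R Z y x"
  unfolding indistinguishable_def by (meson two_structure_sym)

lemma indistinguishable_trans:
  "indistinguishable R Z x y \<Longrightarrow> indistinguishable R Z y y' \<Longrightarrow> indistinguishable R Z x y'"
  unfolding indistinguishable_def by (meson two_structure_trans)

lemma indistinguishable_refl:
  assumes "indistinguishable R Z x y"
  shows "indistinguishable R Z x x"
  using indistinguishable_trans[OF assms indistinguishable_sym[OF assms]] .

lemma indistinguishable_by_twin:
  assumes "indistinguishable R {x, y} a b" "indistinguishable R {b} x y"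
  shows "indistinguishable R {a} x y"
proof -
  have ab: "((x, a), (x, b)) \<in> R" "((y, a), (y, b)) \<in> R" "((a, x), (b, x)) \<in> R" "((a, y), (b, y)) \<in> R"
    and xy: "((x, b), (y, b)) \<in> R" "((b, x), (b, y)) \<in> R"
    using assms unfolding indistinguishable_def by auto
  have "((x, a), (y, a)) \<in> R"
    using two_structure_trans[OF two_structure_trans[OF ab(1) xy(1)] two_structure_sym[OF ab(2)]] .
  moreover have "((a, x), (a, y)) \<in> R"
    using two_structure_trans[OF two_structure_trans[OF ab(3) xy(2)] two_structure_sym[OF ab(4)]] .
  ultimately show ?thesis
    unfolding indistinguishable_def by simp
qed

lemma is_module_in_if_indistinguishable_from:
  assumes "M \<subseteq> W" "\<forall>y\<in>M. indistinguishable R (W - M) a y"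
  shows "is_module_in R W M"
  unfolding is_module_in_iff using assms indistinguishable_sym indistinguishable_trans by blast

lemma class_closed_converse:
  "e \<in> classes V R \<Longrightarrow> q \<in> e \<Longrightarrow> (p, q) \<in> R \<Longrightarrow> p \<in> e"
  using in_quotient_imp_closed[OF two_structure_equiv] two_structure_sym unfolding classes_def by blast

lemma classes_eqI:
  "e \<in> classes V R \<Longrightarrow> e' \<in> classes V R \<Longrightarrow> p \<in> e \<Longrightarrow> q \<in> e' \<Longrightarrow> (p, q) \<in> R \<Longrightarrow> e = e'"
  using quotient_eqI[OF two_structure_equiv] unfolding classes_def by blast

lemma classes_eq_if_common_elem:
  "e \<in> classes V R \<Longrightarrow> e' \<in> classes V R \<Longrightarrow> p \<in> e \<Longrightarrow> p \<in> e' \<Longrightarrow> e = e'"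
  using quotient_disj[OF two_structure_equiv] unfolding classes_def by blast

lemma ext_at_iff:
  assumes "\<alpha> \<in> X"
  shows "v \<in> ext_at V R X \<alpha> \<longleftrightarrow> v \<in> V - X \<and> indistinguishable R (X - {\<alpha>}) \<alpha> v"
proof -
  have outside: "v \<notin> X \<Longrightarrow> X \<union> {v} - {\<alpha>, v} = X - {\<alpha>}"
    by blast
  show ?thesis
  proof
    assume "v \<in> ext_at V R X \<alpha>"
    then show "v \<in> V - X \<and> indistinguishable R (X - {\<alpha>}) \<alpha> v"
      using outside unfolding ext_at_def is_module_in_iff by auto
  next
    assume v: "v \<in> V - X \<and> indistinguishable R (X - {\<alpha>}) \<alpha> v"
    then have "is_module_in R (X \<union> {v}) {\<alpha>, v}"
      using assms outside indistinguishable_refl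
      by (intro is_module_in_if_indistinguishable_from[where a = \<alpha>]) auto
    then show "v \<in> ext_at V R X \<alpha>"
      using v unfolding ext_at_def by blast
  qed
qed

lemma ext_set_Int_ext_at:
  assumes X: "prime_in R X" and \<alpha>: "\<alpha> \<in> X"
  shows "ext_set V R X \<inter> ext_at V R X \<alpha> = {}"
proof (rule ccontr)
  assume "ext_set V R X \<inter> ext_at V R X \<alpha> \<noteq> {}"
  then obtain w where w_set: "w \<in> ext_set V R X" and w_at: "w \<in> ext_at V R X \<alpha>"
    by blast
  have w_twin: "indistinguishable R (X - {\<alpha>}) \<alpha> w"
    using w_at \<alpha> by (simp add: ext_at_iff)
  have "indistinguishable R {\<alpha>} x y" if "x \<in> X - {\<alpha>}" "y \<in> X - {\<alpha>}" for x y
  proof (rule indistinguishable_by_twin)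
    show "indistinguishable R {x, y} \<alpha> w"
      by (rule indistinguishable_mono[OF _ w_twin]) (use that in blast)
    show "indistinguishable R {w} x y"
      using w_set that by (simp add: ext_set_iff)
  qed
  moreover have "X - (X - {\<alpha>}) = {\<alpha>}"
    using \<alpha> by blast
  ultimately have "is_module_in R X (X - {\<alpha>})"
    unfolding is_module_in_iff by auto
  moreover obtain a b where "a \<in> X - {\<alpha>}" "b \<in> X - {\<alpha>}" "a \<noteq> b"
    using X by (rule prime_2s_obtain_two_others)
  moreover have "\<alpha> \<in> X - (X - {\<alpha>})"
    using \<alpha> by blast
  ultimately show False
    using X nontrivial_module_not_prime by metis
qed

lemma ext_at_Int_ext_at:
  assumes X: "prime_in R X" and \<alpha>: "\<alpha> \<in> X" and \<beta>: "\<beta> \<in> X" and "\<alpha> \<noteq> \<beta>"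
  shows "ext_at V R X \<alpha> \<inter> ext_at V R X \<beta> = {}"
proof (rule ccontr)
  assume "ext_at V R X \<alpha> \<inter> ext_at V R X \<beta> \<noteq> {}"
  then obtain w where \<alpha>w: "indistinguishable R (X - {\<alpha>}) \<alpha> w"
    and \<beta>w: "indistinguishable R (X - {\<beta>}) \<beta> w"
    using \<alpha> \<beta> by (auto simp: ext_at_iff)
  have "indistinguishable R (X - {\<alpha>, \<beta>}) \<alpha> w"
    by (rule indistinguishable_mono[OF _ \<alpha>w]) blast
  moreover have "indistinguishable R (X - {\<alpha>, \<beta>}) w \<beta>"
    by (rule indistinguishable_sym, rule indistinguishable_mono[OF _ \<beta>w]) blast
  ultimately have \<alpha>\<beta>: "indistinguishable R (X - {\<alpha>, \<beta>}) \<alpha> \<beta>"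
    by (rule indistinguishable_trans)
  have "is_module_in R X {\<alpha>, \<beta>}"
    using \<alpha> \<beta> \<alpha>\<beta> indistinguishable_refl[OF \<alpha>\<beta>]
    by (intro is_module_in_if_indistinguishable_from[where a = \<alpha>]) auto
  moreover obtain c where "c \<in> X - {\<alpha>, \<beta>}"
    using X by (rule prime_2s_obtain_other)
  ultimately show False
    using X \<open>\<alpha> \<noteq> \<beta>\<close> nontrivial_module_not_prime[where M = "{\<alpha>, \<beta>}" and a = \<alpha> and b = \<beta>]
    by blast
qed

lemma ext_at_pair_not_prime:
  assumes X: "prime_in R X" and \<alpha>: "\<alpha> \<in> X"
    and u: "u \<in> ext_at V R X \<alpha>" and v: "v \<in> ext_at V R X \<alpha>"
  shows "\<not> prime_in R (X \<union> {u, v})"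
proof -
  have u': "u \<in> V - X" "indistinguishable R (X - {\<alpha>}) \<alpha> u"
    and v': "v \<in> V - X" "indistinguishable R (X - {\<alpha>}) \<alpha> v"
    using u v \<alpha> by (simp_all add: ext_at_iff)
  have "X \<union> {u, v} - {\<alpha>, u, v} = X - {\<alpha>}"
    using u' v' by blast
  then have "is_module_in R (X \<union> {u, v}) {\<alpha>, u, v}"
    using \<alpha> u'(2) v'(2) indistinguishable_refl[OF u'(2)]
    by (intro is_module_in_if_indistinguishable_from[where a = \<alpha>]) auto
  moreover obtain c where "c \<in> X - {\<alpha>, u}"
    using X by (rule prime_2s_obtain_other)
  moreover have "\<alpha> \<noteq> u"
    using u' \<alpha> by blast
  ultimately show ?thesis
    using nontrivial_module_not_prime[where M = "{\<alpha>, u, v}" and a = \<alpha> and b = u] u' v'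
    by blast
qed

lemma ext_set_twin:
  assumes w: "w \<in> ext_set V R X" and u: "u \<in> V - X" and twin: "indistinguishable R X u w"
  shows "u \<in> ext_set V R X"
proof -
  have "indistinguishable R {u} x y" if "x \<in> X" "y \<in> X" for x y
  proof (rule indistinguishable_by_twin)
    show "indistinguishable R {x, y} u w"
      by (rule indistinguishable_mono[OF _ twin]) (use that in blast)
    show "indistinguishable R {w} x y"
      using w that by (simp add: ext_set_iff)
  qed
  then show ?thesis
    using u by (simp add: ext_set_iff)
qed

lemma ext_at_twin:
  assumes \<alpha>: "\<alpha> \<in> X" and w: "w \<in> ext_at V R X \<alpha>" and u: "u \<in> V - X"
    and twin: "indistinguishable R X u w"
  shows "u \<in> ext_at V R X \<alpha>"
proof -
  have "indistinguishable R (X - {\<alpha>}) \<alpha> w"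
    using w \<alpha> by (simp add: ext_at_iff)
  moreover have "indistinguishable R (X - {\<alpha>}) w u"
    by (rule indistinguishable_sym, rule indistinguishable_mono[OF _ twin]) blast
  ultimately have "indistinguishable R (X - {\<alpha>}) \<alpha> u"
    by (rule indistinguishable_trans)
  then show ?thesis
    using u \<alpha> by (simp add: ext_at_iff)
qed

lemma ext_set_ef_pairs_in_classes:
  assumes v: "v \<in> ext_set_ef V R X e f" and e: "e \<in> classes V R" and f: "f \<in> classes V R"
    and x: "x \<in> X"
  shows "(v, x) \<in> e \<and> (x, v) \<in> f"
proof -
  obtain \<beta> where \<beta>: "\<beta> \<in> X" "(v, \<beta>) \<in> e" "(\<beta>, v) \<in> f"
    using v unfolding ext_set_ef_def by blast
  have "indistinguishable R {v} \<beta> x"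
    using v \<beta>(1) x unfolding ext_set_ef_def ext_set_iff by blast
  then have "((v, \<beta>), (v, x)) \<in> R" "((\<beta>, v), (x, v)) \<in> R"
    unfolding indistinguishable_def by auto
  then show ?thesis
    using \<beta> e f in_quotient_imp_closed[OF two_structure_equiv] unfolding classes_def by blast
qed

lemma classes_pair_eq:
  assumes "e \<in> classes V R" "f \<in> classes V R" "e' \<in> classes V R" "f' \<in> classes V R"
    and "p \<in> e" "p \<in> f'" "q \<in> f" "q \<in> e'"
  shows "{e', f'} = {e, f}"
proof -
  have "e = f'" "f = e'"
    using assms classes_eq_if_common_elem by blast+
  then show ?thesis
    by blast
qed

context
  fixes X :: "'a set"
  assumes X_prime: "prime_in R X"
    and no_prime_triple: "\<not> (\<exists>Y. Y \<subseteq> V - X \<and> card Y = 3 \<and> prime_in R (X \<union> Y))"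
begin

lemma outside_edge_triple_cases:
  assumes edge: "outside_edge V R X v u" and w: "w \<in> V - X" "w \<noteq> u" "w \<noteq> v"
  shows "is_module_in R (X \<union> {u, v, w}) (X \<union> {u, v}) \<or>
    (\<exists>z\<in>X \<union> {u, v}. is_module_in R (X \<union> {u, v, w}) {z, w})"
proof -
  have u: "u \<in> V - X" "u \<noteq> v" and v: "v \<in> V - X" and uv: "prime_in R (X \<union> {u, v})"
    using edge unfolding outside_edge_def by (auto simp: insert_commute)
  have "{u, v, w} \<subseteq> V - X" "card {u, v, w} = 3"
    using u v w by auto
  then have "\<not> prime_in R (X \<union> {u, v, w})"
    using no_prime_triple by blast
  moreover have "w \<notin> X \<union> {u, v}"
    using w by blast
  moreover have "insert w (X \<union> {u, v}) = X \<union> {u, v, w}"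
    by blast
  ultimately show ?thesis
    using prime_insert_cases[OF uv] by metis
qed

lemma outside_edge_extension_cases:
  assumes edge: "outside_edge V R X v u" and w: "w \<in> V - X" "w \<noteq> u" "w \<noteq> v"
  obtains (module) "w \<in> ext_set V R X" "is_module_in R (X \<union> {v, w}) (X \<union> {v})"
    | (pair) z where "z \<in> X" "w \<in> ext_at V R X z" "is_module_in R (X \<union> {v, w}) {z, w}"
    | (twin_v) "indistinguishable R X v w"
    | (twin_u) "indistinguishable R X u w"
proof -
  have u: "u \<in> V - X" "u \<noteq> v" and v: "v \<in> V - X"
    using edge unfolding outside_edge_def by auto
  consider (block) "is_module_in R (X \<union> {u, v, w}) (X \<union> {u, v})"
    | (pair) z where "z \<in> X \<union> {u, v}" "is_module_in R (X \<union> {u, v, w}) {z, w}"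
    using outside_edge_triple_cases[OF edge w] by blast
  then show ?thesis
  proof cases
    case block
    have "is_module_in R (X \<union> {w}) X" "is_module_in R (X \<union> {v, w}) (X \<union> {v})"
      using u w by (auto intro: is_module_in_restrict[OF block])
    then show ?thesis
      using w module unfolding ext_set_def by blast
  next
    case (pair z)
    consider "z \<in> X" | "z = v" | "z = u"
      using pair(1) by blast
    then show ?thesis
    proof cases
      case 1
      have "is_module_in R (X \<union> {w}) {z, w}" "is_module_in R (X \<union> {v, w}) {z, w}"
        using 1 by (auto intro: is_module_in_restrict[OF pair(2)])
      then show ?thesis
        using 1 w that(2) unfolding ext_at_def by blast
    next
      case 2
      have "indistinguishable R X v w"
        by (rule indistinguishable_if_pair_module[OF pair(2)[unfolded 2]]) (use v w in blast)+
      then show ?thesis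
        by (rule twin_v)
    next
      case 3
      have "indistinguishable R X u w"
        by (rule indistinguishable_if_pair_module[OF pair(2)[unfolded 3]]) (use u w in blast)+
      then show ?thesis
        by (rule twin_u)
    qed
  qed
qed

lemma ext_set_extension_module:
  assumes edge: "outside_edge V R X v u"
    and v: "v \<in> ext_set V R X" and w: "w \<in> ext_set V R X" and "w \<noteq> v"
    and not_twins: "\<not> indistinguishable R X v w"
  shows "is_module_in R (X \<union> {v, w}) (X \<union> {v})"
proof -
  have u_out: "u \<in> V - X" and "prime_in R (X \<union> {u, v})"
    using edge unfolding outside_edge_def by (auto simp: insert_commute)
  then have u_not: "u \<notin> ext_set V R X"
    using ext_set_pair_not_prime[OF X_prime _ v] by blast
  have w_out: "w \<in> V - X"
    using w unfolding ext_set_def by blast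
  have "w \<noteq> u"
    using w u_not by blast
  then show ?thesis
  proof (rule outside_edge_extension_cases[OF edge w_out _ \<open>w \<noteq> v\<close>])
    show ?thesis if "is_module_in R (X \<union> {v, w}) (X \<union> {v})"
      using that .
    show ?thesis if "z \<in> X" "w \<in> ext_at V R X z" for z
      using ext_set_Int_ext_at[OF X_prime that(1)] that(2) w by blast
    show ?thesis if "indistinguishable R X v w"
      using not_twins that by blast
    show ?thesis if "indistinguishable R X u w"
      using ext_set_twin[OF w u_out that] u_not by blast
  qed
qed

lemma ext_set_ef_cross_classes:
  assumes edge: "outside_edge V R X v u"
    and v: "v \<in> ext_set_ef V R X e f" and w: "w \<in> ext_set_ef V R X e' f'"
    and e: "e \<in> classes V R" and f: "f \<in> classes V R"
    and e': "e' \<in> classes V R" and f': "f' \<in> classes V R"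
    and ne: "(e, f) \<noteq> (e', f')"
  shows "(w, v) \<in> e' \<and> (v, w) \<in> f'"
proof -
  obtain a where a: "a \<in> X"
    using X_prime unfolding prime_2s_def by blast
  have va: "(v, a) \<in> e" "(a, v) \<in> f" and wa: "(w, a) \<in> e'" "(a, w) \<in> f'"
    using ext_set_ef_pairs_in_classes[OF v e f a] ext_set_ef_pairs_in_classes[OF w e' f' a]
    by blast+
  have "w \<noteq> v"
    using classes_eq_if_common_elem[OF e e' va(1)] classes_eq_if_common_elem[OF f f' va(2)] wa ne
    by blast
  moreover have "\<not> indistinguishable R X v w"
  proof
    assume "indistinguishable R X v w"
    then have "((v, a), (w, a)) \<in> R" "((a, v), (a, w)) \<in> R"
      using a unfolding indistinguishable_def by auto
    then have "e = e'" "f = f'"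
      using classes_eqI[OF e e' va(1) wa(1)] classes_eqI[OF f f' va(2) wa(2)] by blast+
    with ne show False
      by simp
  qed
  moreover have "v \<in> ext_set V R X" "w \<in> ext_set V R X"
    using v w unfolding ext_set_ef_def by blast+
  ultimately have "is_module_in R (X \<union> {v, w}) (X \<union> {v})"
    using ext_set_extension_module[OF edge] by blast
  moreover have "w \<in> X \<union> {v, w} - (X \<union> {v})"
    using w \<open>w \<noteq> v\<close> unfolding ext_set_ef_def ext_set_def by blast
  ultimately have "((v, w), (a, w)) \<in> R" "((w, v), (w, a)) \<in> R"
    using a unfolding is_module_in_iff indistinguishable_def by blast+
  then show ?thesis
    using class_closed_converse[OF e'] class_closed_converse[OF f'] wa by blast
qed

lemma ext_at_extension_module:
  assumes edge: "outside_edge V R X v u" and \<alpha>: "\<alpha> \<in> X"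
    and v: "v \<in> ext_at V R X \<alpha>" and w: "w \<in> ext_at V R X \<alpha>" and "w \<noteq> v"
    and not_twins: "\<not> indistinguishable R X v w"
  shows "is_module_in R (X \<union> {v, w}) {\<alpha>, w}"
proof -
  have u_out: "u \<in> V - X" and "prime_in R (X \<union> {u, v})"
    using edge unfolding outside_edge_def by (auto simp: insert_commute)
  then have u_not: "u \<notin> ext_at V R X \<alpha>"
    using ext_at_pair_not_prime[OF X_prime \<alpha> _ v] by blast
  have w_out: "w \<in> V - X"
    using w unfolding ext_at_def by blast
  have "w \<noteq> u"
    using w u_not by blast
  then show ?thesis
  proof (rule outside_edge_extension_cases[OF edge w_out _ \<open>w \<noteq> v\<close>])
    show ?thesis if "w \<in> ext_set V R X"
      using ext_set_Int_ext_at[OF X_prime \<alpha>] that w by blast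
    show ?thesis if "z \<in> X" "w \<in> ext_at V R X z" "is_module_in R (X \<union> {v, w}) {z, w}" for z
    proof (cases "z = \<alpha>")
      case True
      with that(3) show ?thesis
        by simp
    next
      case False
      with ext_at_Int_ext_at[OF X_prime that(1) \<alpha>] that(2) w show ?thesis
        by blast
    qed
    show ?thesis if "indistinguishable R X v w"
      using not_twins that by blast
    show ?thesis if "indistinguishable R X u w"
      using ext_at_twin[OF \<alpha> w u_out that] u_not by blast
  qed
qed

lemma ext_at_ef_cross_classes:
  assumes edge: "outside_edge V R X v u" and \<alpha>: "\<alpha> \<in> X"
    and v: "v \<in> ext_at_ef V R X \<alpha> e f" and w: "w \<in> ext_at_ef V R X \<alpha> e' f'"
    and e: "e \<in> classes V R" and f: "f \<in> classes V R"
    and e': "e' \<in> classes V R" and f': "f' \<in> classes V R"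
    and ne: "(e, f) \<noteq> (e', f')"
  shows "(v, w) \<in> e \<and> (w, v) \<in> f"
proof -
  have v_at: "v \<in> ext_at V R X \<alpha>" and va: "(v, \<alpha>) \<in> e" "(\<alpha>, v) \<in> f"
    and w_at: "w \<in> ext_at V R X \<alpha>" and wa: "(w, \<alpha>) \<in> e'" "(\<alpha>, w) \<in> f'"
    using v w unfolding ext_at_ef_def by blast+
  have "w \<noteq> v"
    using classes_eq_if_common_elem[OF e e' va(1)] classes_eq_if_common_elem[OF f f' va(2)] wa ne
    by blast
  moreover have "\<not> indistinguishable R X v w"
  proof
    assume "indistinguishable R X v w"
    then have "((v, \<alpha>), (w, \<alpha>)) \<in> R" "((\<alpha>, v), (\<alpha>, w)) \<in> R"
      using \<alpha> unfolding indistinguishable_def by auto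
    then have "e = e'" "f = f'"
      using classes_eqI[OF e e' va(1) wa(1)] classes_eqI[OF f f' va(2) wa(2)] by blast+
    with ne show False
      by simp
  qed
  ultimately have "is_module_in R (X \<union> {v, w}) {\<alpha>, w}"
    using ext_at_extension_module[OF edge \<alpha> v_at w_at] by blast
  moreover have "v \<in> X \<union> {v, w} - {\<alpha>, w}"
    using v_at \<alpha> \<open>w \<noteq> v\<close> unfolding ext_at_def by blast
  ultimately have "((\<alpha>, v), (w, v)) \<in> R" "((v, \<alpha>), (v, w)) \<in> R"
    using \<alpha> unfolding is_module_in_iff indistinguishable_def by blast+
  then show ?thesis
    using in_quotient_imp_closed[OF two_structure_equiv] e f va unfolding classes_def by blast
qed

lemma ext_set_ef_class_pair_unique:
  assumes no_isolated: "\<forall>u\<in>V - X. \<exists>w. outside_edge V R X u w"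
    and v: "v \<in> ext_set_ef V R X e f" and w: "w \<in> ext_set_ef V R X e' f'"
    and cl: "e \<in> classes V R" "f \<in> classes V R" "e' \<in> classes V R" "f' \<in> classes V R"
  shows "{e', f'} = {e, f}"
proof (cases "(e, f) = (e', f')")
  case False
  obtain u u' where edges: "outside_edge V R X v u" "outside_edge V R X w u'"
    using no_isolated v w unfolding ext_set_ef_def ext_set_def by blast
  have "(w, v) \<in> e' \<and> (v, w) \<in> f'"
    using ext_set_ef_cross_classes[OF edges(1) v w cl False] .
  moreover have "(v, w) \<in> e \<and> (w, v) \<in> f"
    using ext_set_ef_cross_classes[OF edges(2) w v cl(3,4,1,2)] False by auto
  ultimately show ?thesis
    using classes_pair_eq[OF cl] by blast
qed auto

lemma ext_at_ef_class_pair_unique: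
  assumes no_isolated: "\<forall>u\<in>V - X. \<exists>w. outside_edge V R X u w" and \<alpha>: "\<alpha> \<in> X"
    and v: "v \<in> ext_at_ef V R X \<alpha> e f" and w: "w \<in> ext_at_ef V R X \<alpha> e' f'"
    and cl: "e \<in> classes V R" "f \<in> classes V R" "e' \<in> classes V R" "f' \<in> classes V R"
  shows "{e', f'} = {e, f}"
proof (cases "(e, f) = (e', f')")
  case False
  obtain u u' where edges: "outside_edge V R X v u" "outside_edge V R X w u'"
    using no_isolated v w unfolding ext_at_ef_def ext_at_def by blast
  have "(v, w) \<in> e \<and> (w, v) \<in> f"
    using ext_at_ef_cross_classes[OF edges(1) \<alpha> v w cl False] .
  moreover have "(w, v) \<in> e' \<and> (v, w) \<in> f'"
    using ext_at_ef_cross_classes[OF edges(2) \<alpha> w v cl(3,4,1,2)] False by auto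
  ultimately show ?thesis
    using classes_pair_eq[OF cl] by blast
qed auto

end

end

theorem lemma3p6:
  fixes V :: "'a set" and R :: "(('a \<times> 'a) \<times> ('a \<times> 'a)) set" and X :: "'a set"
    and e f :: "('a \<times> 'a) set" and \<alpha> :: 'a
  assumes two: "two_structure V R"
    and XV: "X \<subset> V"
    and Xprime: "prime_2s X (induced_rel R X)"
    and S3: "\<not> (\<exists>Y. Y \<subseteq> V - X \<and> card Y = 3 \<and> prime_2s (X \<union> Y) (induced_rel R (X \<union> Y)))"
    and e: "e \<in> classes V R" and f: "f \<in> classes V R"
    and \<alpha>: "\<alpha> \<in> X"
    and noiso: "\<forall>u\<in>V - X. \<exists>w. outside_edge V R X u w"
  shows "(ext_set_ef V R X e f \<noteq> {} \<longrightarrow>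
            (\<forall>e'\<in>classes V R. \<forall>f'\<in>classes V R. {e', f'} \<noteq> {e, f} \<longrightarrow> ext_set_ef V R X e' f' = {}))
       \<and> (ext_at_ef V R X \<alpha> e f \<noteq> {} \<longrightarrow>
            (\<forall>e'\<in>classes V R. \<forall>f'\<in>classes V R. {e', f'} \<noteq> {e, f} \<longrightarrow> ext_at_ef V R X \<alpha> e' f' = {}))"
proof (intro conjI impI ballI)
  fix e' f'
  assume "ext_set_ef V R X e f \<noteq> {}" "e' \<in> classes V R" "f' \<in> classes V R" "{e', f'} \<noteq> {e, f}"
  then show "ext_set_ef V R X e' f' = {}"
    using ext_set_ef_class_pair_unique[OF two Xprime S3 noiso _ _ e f] by blast
next
  fix e' f'
  assume "ext_at_ef V R X \<alpha> e f \<noteq> {}" "e' \<in> classes V R" "f' \<in> classes V R" "{e', f'} \<noteq> {e, f}"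
  then show "ext_at_ef V R X \<alpha> e' f' = {}"
    using ext_at_ef_class_pair_unique[OF two Xprime S3 noiso \<alpha> _ _ e f] by blast
qed

end
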